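(* Fix integers $t\ge1$, $C_1,\dots,C_t\ge 1$, $A_1,\dots,A_t$ and $B_1,\dots,B_t$ with $0\le A_i\le C_i/2$ and $0\le B_i\le C_i/2$ for all $i$, and $m\ge 0$, $N_0\ge 1$. Let $S$ (resp. $T$) be the multiset of positive integers containing, for each $i=1,\dots,t$, one copy of each positive integer congruent to $A_i$ (resp. $B_i$) modulo $C_i$ and, separately, one copy of each positive integer congruent to $-A_i$ (resp. $-B_i$) modulo $C_i$, all copies regarded as distinct elements (so a residue class with $A_i\equiv -A_i$, resp. $B_i\equiv -B_i$, modulo $C_i$ contributes two copies). Let $D_S(N)$ (resp. $D_T(N)$) be the number of partitions of $N$ into distinct elements of $S$ (resp. $T$), where, if no $A_i$ (resp. no $B_i$) equals $0$, only partitions with an odd number of parts are counted. Let $z_A$, $z_B$ be the numbers of indices $i$ with $A_i=0$, resp. $B_i=0$, and set $p=\max(z_B,1)-\max(z_A,1)$. Then the following are equivalent: (i) For every $N\ge N_0$, the number of tuples $(\mu_1,\dots,\mu_t;d_1,\dots,d_t)\in P^t\times\mathbb Z^t$ with $\sum_i d_i$ odd and $\sum_{i}C_i|\mu_i|+\sum_i C_i\binom{d_i}{2}+\sum_i A_id_i=N$ equals the number of tuples $(\alpha_1,\dots,\alpha_t;e_1,\dots,e_t)\in P^t\times\mathbb Z^t$ with $\sum_i e_i$ odd and $\sum_i C_i|\alpha_i|+\sum_i C_i\binom{e_i}{2}+\sum_i B_ie_i+m=N$. (ii) For every $N\ge N_0$, $D_S(N)=2^{p}\cdot D_T(N-m)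$.
   Context: $P$ denotes the set of all integer partitions into positive parts (including the empty partition $\emptyset$, the unique partition of $0$); for a partition $\lambda$, $|\lambda|$ is the sum of its parts. For $d\in\mathbb Z$, $\binom{d}{2}=d(d-1)/2$. A partition of $N$ into distinct elements of a multiset $S$ is a finite set of distinct elements of $S$ (distinct copies of the same integer count as distinct elements) whose values sum to $N$; $D_T(n)=0$ for $n<0$. *)

theory Defs
  imports Complex_Main "HOL-Library.Multiset"
begin

text \<open>Integer partitions (the set P): multisets of positive naturals; size = sum of parts.\<close>
definition is_partition :: "nat multiset \<Rightarrow> bool" where
  "is_partition \<mu> \<longleftrightarrow> 0 \<notin># \<mu>"

definition binom2 :: "int \<Rightarrow> int" where
  "binom2 d = d * (d - 1) div 2"

definition tuple_count :: "nat \<Rightarrow> (nat \<Rightarrow> int) \<Rightarrow> (nat \<Rightarrow> int) \<Rightarrow> int \<Rightarrow> nat" where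
  "tuple_count t C A N = card {(\<mu> :: nat \<Rightarrow> nat multiset, d :: nat \<Rightarrow> int).
      (\<forall>i. t \<le> i \<longrightarrow> \<mu> i = {#} \<and> d i = 0) \<and>
      (\<forall>i<t. is_partition (\<mu> i)) \<and>
      odd (\<Sum>i<t. d i) \<and>
      (\<Sum>i<t. C i * int (sum_mset (\<mu> i))) + (\<Sum>i<t. C i * binom2 (d i)) + (\<Sum>i<t. A i * d i) = N}"

text \<open>The multiset S built from (C_i, A_i): its elements are triples (i, s, n) with i < t,
  n a positive integer, n = A_i mod C_i if s, and n = -A_i mod C_i if not s.
  The value of element (i, s, n) is n.  Distinct triples are distinct copies.\<close>
definition res_mset :: "nat \<Rightarrow> (nat \<Rightarrow> int) \<Rightarrow> (nat \<Rightarrow> int) \<Rightarrow> (nat \<times> bool \<times> nat) set" where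
  "res_mset t C A = {(i, s, n). i < t \<and> 0 < n \<and>
      (if s then int n mod C i = A i mod C i else int n mod C i = (- A i) mod C i)}"

definition D_count :: "nat \<Rightarrow> (nat \<Rightarrow> int) \<Rightarrow> (nat \<Rightarrow> int) \<Rightarrow> int \<Rightarrow> nat" where
  "D_count t C A N = card {X. X \<subseteq> res_mset t C A \<and> finite X \<and>
      int (\<Sum>x\<in>X. snd (snd x)) = N \<and>
      ((\<forall>i<t. A i \<noteq> 0) \<longrightarrow> odd (card X))}"

definition zero_count :: "nat \<Rightarrow> (nat \<Rightarrow> int) \<Rightarrow> nat" where
  "zero_count t A = card {i. i < t \<and> A i = 0}"

end

theory Submission
  imports Defs "HOL-Library.Equipollence"
begin

text \<open>
  Both sides of the equivalence are statements about the same numbers, because for every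
  admissible datum \<open>(C, A)\<close> (with \<open>0 \<le> A i < C i\<close>) and every \<open>N\<close>
    \<open>tuple_count t C A N = 2^(max(z_A, 1) - 1) \<cdot> D_count t C A N\<close>
  (lemma \<open>tuple_count_D_count\<close>); the theorem then follows by dividing out powers of two.

  This identity is proved bijectively, following a combinatorial proof of Jacobi's triple
  product identity:
  \<^item> Frobenius pairs \<open>(X, Y)\<close> of finite sets of naturals with \<open>0 \<notin> Y\<close>, with charge
    \<open>|X| - |Y|\<close> and weight \<open>\<Sum>X + \<Sum>Y\<close>, correspond to pairs (partition \<open>\<mu>\<close>, integer \<open>d\<close>)
    with charge \<open>d\<close> and weight \<open>|\<mu>| + binom2 d\<close> (\<open>jacobi_bij\<close>).  For charge zero this
    is the hook decomposition of a partition; other charges are reduced to zero by shifting.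
  \<^item> A Frobenius pair becomes a finite set of tagged residues \<open>C j + A\<close> (\<open>j \<in> X\<close>) and
    \<open>C j - A\<close> (\<open>j \<in> Y\<close>), turning the weight into \<open>C \<cdot> weight + A \<cdot> charge\<close>
    (\<open>res_emb_bij\<close>, \<open>res_emb_stats\<close>); taking all indices \<open>i < t\<close> together
    (\<open>bij_betw_tuples_Sigma\<close>) gives \<open>tuple_count_residues\<close>.
  \<^item> The residue \<open>0\<close>, present once for every \<open>A i = 0\<close>, does not contribute to the
    sum; it only adjusts the parity, which yields the factor \<open>2^(z_A - 1)\<close>
    (\<open>card_odd_subsets_extend\<close>).
\<close>

text \<open>Partitions of \<open>M\<close> fitting into an \<open>a \<times> b\<close> box (parts \<open>\<le> a\<close>, at most \<open>b\<close> parts), and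
  the corresponding Frobenius-type pairs: equally many "arms" \<open>X \<subseteq> {0..<a}\<close> and "legs"
  \<open>Y \<subseteq> {1..b}\<close>.  Removing the outer hook shows that both families obey the same
  recursion in \<open>M\<close>, hence are equipollent.\<close>
definition box_partitions :: "nat \<Rightarrow> nat \<Rightarrow> nat \<Rightarrow> nat multiset set" where
  "box_partitions a b M =
     {\<mu>. 0 \<notin># \<mu> \<and> (\<forall>x\<in>#\<mu>. x \<le> a) \<and> size \<mu> \<le> b \<and> sum_mset \<mu> = M}"

definition box_pairs :: "nat \<Rightarrow> nat \<Rightarrow> nat \<Rightarrow> (nat set \<times> nat set) set" where
  "box_pairs a b M =
     {(X, Y). X \<subseteq> {..<a} \<and> Y \<subseteq> {1..b} \<and> card X = card Y \<and> \<Sum>X + \<Sum>Y = M}"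

definition hook_index :: "nat \<Rightarrow> nat \<Rightarrow> nat \<Rightarrow> (nat \<times> nat) set" where
  "hook_index a b M = {(a', b'). a' < a \<and> b' < b \<and> a' + b' + 1 \<le> M}"

definition hook_partition :: "nat \<Rightarrow> nat \<Rightarrow> nat multiset \<Rightarrow> nat multiset" where
  "hook_partition a' b' \<mu> =
     add_mset (Suc a') (image_mset Suc \<mu> + replicate_mset (b' - size \<mu>) 1)"

definition hook_pair :: "nat \<Rightarrow> nat \<Rightarrow> nat set \<times> nat set \<Rightarrow> nat set \<times> nat set" where
  "hook_pair a' b' = (\<lambda>(X, Y). (insert a' X, insert (Suc b') Y))"

lemma sum_mset_image_Suc: "sum_mset (image_mset Suc \<mu>) = sum_mset \<mu> + size \<mu>"
  by (induction \<mu>) auto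

lemma hook_partition_in:
  assumes "\<mu> \<in> box_partitions a' b' (M - a' - b' - 1)" "(a', b') \<in> hook_index a b M"
  shows "hook_partition a' b' \<mu> \<in> box_partitions a b M"
  using assms unfolding box_partitions_def hook_index_def hook_partition_def
  by (auto simp: sum_mset_image_Suc)

lemma hook_partition_inj: "inj_on (hook_partition a' b') (box_partitions a' b' K)"
proof (rule inj_onI)
  fix \<mu> \<nu> assume "\<mu> \<in> box_partitions a' b' K" "\<nu> \<in> box_partitions a' b' K"
    and eq: "hook_partition a' b' \<mu> = hook_partition a' b' \<nu>"
  then have no0: "0 \<notin># \<mu>" "0 \<notin># \<nu>" unfolding box_partitions_def by auto
  have big: "filter_mset (\<lambda>x. 2 \<le> x) (image_mset Suc \<rho> + replicate_mset n 1) = image_mset Suc \<rho>"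
    if "0 \<notin># \<rho>" for \<rho> :: "nat multiset" and n
  proof -
    have "filter_mset (\<lambda>x. 2 \<le> x) (image_mset Suc \<rho>) = image_mset Suc \<rho>"
      using that by (induction \<rho>) auto
    moreover have "filter_mset (\<lambda>x. 2 \<le> x) (replicate_mset n (1::nat)) = {#}"
      by (induction n) auto
    ultimately show ?thesis by simp
  qed
  from eq have "image_mset Suc \<mu> + replicate_mset (b' - size \<mu>) 1
      = image_mset Suc \<nu> + replicate_mset (b' - size \<nu>) 1"
    unfolding hook_partition_def by simp
  then have "image_mset Suc \<mu> = image_mset Suc \<nu>" using big[OF no0(1)] big[OF no0(2)] by metis
  then have "image_mset (\<lambda>x. x - 1) (image_mset Suc \<mu>) = image_mset (\<lambda>x. x - 1) (image_mset Suc \<nu>)"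
    by simp
  then show "\<mu> = \<nu>" by (simp add: image_mset.compositionality comp_def)
qed

lemma hook_partition_shape:
  assumes "\<mu> \<in> box_partitions a' b' K"
  shows "Max_mset (hook_partition a' b' \<mu>) = Suc a'" "size (hook_partition a' b' \<mu>) = Suc b'"
  using assms unfolding box_partitions_def hook_partition_def
  by (auto intro!: Max_eqI)

lemma hook_partition_surj:
  assumes L: "L \<in> box_partitions a b M" and "L \<noteq> {#}"
  shows "\<exists>(a', b')\<in>hook_index a b M. L \<in> hook_partition a' b' ` box_partitions a' b' (M - a' - b' - 1)"
proof -
  define m where "m = Max_mset L"
  have m: "m \<in># L" "\<forall>x\<in>#L. x \<le> m" using \<open>L \<noteq> {#}\<close> unfolding m_def by auto
  have no0: "0 \<notin># L" and le: "\<forall>x\<in>#L. x \<le> a" and sz: "size L \<le> b" and sm: "sum_mset L = M"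
    using L unfolding box_partitions_def by auto
  have "m \<ge> 1" using m no0 by (cases m) auto
  define R where "R = L - {#m#}"
  have LR: "L = add_mset m R" using m unfolding R_def by simp
  define \<mu> where "\<mu> = image_mset (\<lambda>x. x - 1) (filter_mset (\<lambda>x. 2 \<le> x) R)"
  have R_split: "R = filter_mset (\<lambda>x. 2 \<le> x) R + replicate_mset (count R 1) 1"
    using no0 unfolding LR
  proof (induction R)
    case (add x R) then show ?case by (cases "x = 1") (auto simp: add_mset_commute)
  qed simp
  have Suc_\<mu>: "image_mset Suc \<mu> = filter_mset (\<lambda>x. 2 \<le> x) R"
    unfolding \<mu>_def image_mset.compositionality
    by (induction R) auto
  have size_R: "size R = size \<mu> + count R 1"
    using arg_cong[OF R_split, of size] unfolding \<mu>_def by simp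
  have sum_L: "sum_mset L = m + sum_mset \<mu> + size \<mu> + count R 1"
    using arg_cong[OF R_split, of sum_mset] Suc_\<mu> sum_mset_image_Suc[of \<mu>] LR
    by (simp add: sum_mset_replicate_mset)
  define a' where "a' = m - 1"
  define b' where "b' = size L - 1"
  have "hook_partition a' b' \<mu> = L"
    unfolding hook_partition_def Suc_\<mu> a'_def b'_def using \<open>m \<ge> 1\<close> size_R LR R_split by simp
  moreover have "(a', b') \<in> hook_index a b M"
    unfolding hook_index_def a'_def b'_def using m le sz sm sum_L size_R LR \<open>m \<ge> 1\<close> by auto
  moreover have "\<mu> \<in> box_partitions a' b' (M - a' - b' - 1)"
  proof -
    have "\<forall>x\<in>#\<mu>. x \<le> a'" using m(2) unfolding \<mu>_def a'_def LR by auto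
    then show ?thesis
      unfolding box_partitions_def using sum_L sm size_R LR \<open>m \<ge> 1\<close>
      by (auto simp: \<mu>_def a'_def b'_def)
  qed
  ultimately show ?thesis by blast
qed

lemma hook_pair_in:
  assumes "q \<in> box_pairs a' b' (M - a' - b' - 1)" "(a', b') \<in> hook_index a b M"
  shows "hook_pair a' b' q \<in> box_pairs a b M"
proof -
  obtain X Y where q: "q = (X, Y)" by force
  have "X \<subseteq> {..<a'}" "Y \<subseteq> {1..b'}" using assms(1) unfolding q box_pairs_def by auto
  then have "finite X" "finite Y" "a' \<notin> X" "Suc b' \<notin> Y"
    by (auto intro: finite_subset)
  then show ?thesis
    using assms unfolding q hook_pair_def box_pairs_def hook_index_def by auto
qed

lemma hook_pair_inj: "inj_on (hook_pair a' b') (box_pairs a' b' K)"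
proof (rule inj_onI)
  fix p q assume "p \<in> box_pairs a' b' K" "q \<in> box_pairs a' b' K"
    and eq: "hook_pair a' b' p = hook_pair a' b' q"
  moreover obtain X Y X' Y' where pq: "p = (X, Y)" "q = (X', Y')" by force
  ultimately have "a' \<notin> X" "a' \<notin> X'" "Suc b' \<notin> Y" "Suc b' \<notin> Y'"
    and "insert a' X = insert a' X'" "insert (Suc b') Y = insert (Suc b') Y'"
    unfolding box_pairs_def hook_pair_def by auto
  then show "p = q" unfolding pq by (metis insert_ident)
qed

lemma hook_pair_shape:
  assumes "q \<in> box_pairs a' b' K"
  shows "Max (fst (hook_pair a' b' q)) = a'" "Max (snd (hook_pair a' b' q)) = Suc b'"
proof -
  obtain X Y where q: "q = (X, Y)" by force
  have "X \<subseteq> {..<a'}" "Y \<subseteq> {1..b'}" using assms unfolding q box_pairs_def by auto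
  moreover from this have "finite X" "finite Y" by (auto intro: finite_subset)
  ultimately show "Max (fst (hook_pair a' b' q)) = a'" "Max (snd (hook_pair a' b' q)) = Suc b'"
    unfolding q hook_pair_def by (auto intro!: Max_eqI)
qed

lemma hook_pair_surj:
  assumes q: "q \<in> box_pairs a b M" and "q \<noteq> ({}, {})"
  shows "\<exists>(a', b')\<in>hook_index a b M. q \<in> hook_pair a' b' ` box_pairs a' b' (M - a' - b' - 1)"
proof -
  obtain X Y where q_def: "q = (X, Y)" by force
  have X: "X \<subseteq> {..<a}" and Y: "Y \<subseteq> {1..b}" and card: "card X = card Y"
    and sum: "\<Sum>X + \<Sum>Y = M" using q unfolding q_def box_pairs_def by auto
  have fin: "finite X" "finite Y" using X Y by (auto intro: finite_subset)
  then have ne: "X \<noteq> {}" "Y \<noteq> {}" using \<open>q \<noteq> ({}, {})\<close> card unfolding q_def by auto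
  define x y where "x = Max X" and "y = Max Y"
  have xX: "x \<in> X" and yY: "y \<in> Y" using fin ne unfolding x_def y_def by auto
  have "y \<ge> 1" using yY Y by auto
  have X': "X - {x} \<subseteq> {..<x}"
    using fin unfolding x_def by (auto intro: le_neq_implies_less)
  have Y': "Y - {y} \<subseteq> {1..y - 1}"
  proof
    fix z assume "z \<in> Y - {y}"
    moreover from this have "z \<le> y" using fin unfolding y_def by simp
    ultimately show "z \<in> {1..y - 1}" using Y by auto
  qed
  have cards: "card X = Suc (card (X - {x}))" "card Y = Suc (card (Y - {y}))"
    using card_Suc_Diff1[OF fin(1) xX] card_Suc_Diff1[OF fin(2) yY] by simp_all
  have sums: "\<Sum>X = x + \<Sum>(X - {x})" "\<Sum>Y = y + \<Sum>(Y - {y})"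
    using sum.remove[OF fin(1) xX] sum.remove[OF fin(2) yY] by simp_all
  have "(x, y - 1) \<in> hook_index a b M"
    using xX yY X Y sum sums \<open>y \<ge> 1\<close> unfolding hook_index_def by auto
  moreover have "(X - {x}, Y - {y}) \<in> box_pairs x (y - 1) (M - x - (y - 1) - 1)"
    using X' Y' card cards sum sums \<open>y \<ge> 1\<close> unfolding box_pairs_def by simp
  moreover have "q = hook_pair x (y - 1) (X - {x}, Y - {y})"
    unfolding q_def hook_pair_def using xX yY \<open>y \<ge> 1\<close> by auto
  ultimately show ?thesis by blast
qed

lemma box_partitions_decomp:
  "box_partitions a b M = (if M = 0 then {{#}} else {}) \<union>
     (\<Union>(a', b')\<in>hook_index a b M. hook_partition a' b' ` box_partitions a' b' (M - a' - b' - 1))"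
  (is "_ = ?E \<union> ?H")
proof (intro equalityI subsetI)
  fix L assume L: "L \<in> box_partitions a b M"
  show "L \<in> ?E \<union> ?H"
  proof (cases "L = {#}")
    case True then show ?thesis using L unfolding box_partitions_def by auto
  next
    case False then show ?thesis using hook_partition_surj[OF L] by blast
  qed
next
  fix L assume "L \<in> ?E \<union> ?H"
  then show "L \<in> box_partitions a b M"
  proof
    assume "L \<in> ?E" then show ?thesis by (cases "M = 0") (auto simp: box_partitions_def)
  qed (use hook_partition_in in fast)
qed

lemma box_pairs_decomp:
  "box_pairs a b M = (if M = 0 then {({}, {})} else {}) \<union>
     (\<Union>(a', b')\<in>hook_index a b M. hook_pair a' b' ` box_pairs a' b' (M - a' - b' - 1))"
  (is "_ = ?E \<union> ?H")
proof (intro equalityI subsetI)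
  fix q assume q: "q \<in> box_pairs a b M"
  show "q \<in> ?E \<union> ?H"
  proof (cases "q = ({}, {})")
    case True then show ?thesis using q unfolding box_pairs_def by auto
  next
    case False then show ?thesis using hook_pair_surj[OF q] by blast
  qed
next
  fix q assume "q \<in> ?E \<union> ?H"
  then show "q \<in> box_pairs a b M"
  proof
    assume "q \<in> ?E" then show ?thesis by (cases "M = 0") (auto simp: box_pairs_def)
  qed (use hook_pair_in in fast)
qed

lemma box_partitions_eqpoll_box_pairs: "box_partitions a b M \<approx> box_pairs a b M"
proof (induction M arbitrary: a b rule: less_induct)
  case (less M)
  let ?G = "\<lambda>(a', b'). hook_partition a' b' ` box_partitions a' b' (M - a' - b' - 1)"
  let ?H = "\<lambda>(a', b'). hook_pair a' b' ` box_pairs a' b' (M - a' - b' - 1)"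
  have "?G p \<approx> ?H p" if "p \<in> hook_index a b M" for p
  proof -
    obtain a' b' where p: "p = (a', b')" by force
    have "M - a' - b' - 1 < M" using that unfolding p hook_index_def by auto
    then have "box_partitions a' b' (M - a' - b' - 1) \<approx> box_pairs a' b' (M - a' - b' - 1)"
      by (rule less)
    then show ?thesis
      unfolding p using hook_partition_inj hook_pair_inj
      by (simp add: inj_on_image_eqpoll_1 inj_on_image_eqpoll_2)
  qed
  \<comment> \<open>a hook is determined by the partition (pair) it produces\<close>
  moreover have "p = (Max_mset L - 1, size L - 1)" if "L \<in> ?G p" for L p
    using that hook_partition_shape by (cases p) auto
  then have "pairwise (\<lambda>p p'. disjnt (?G p) (?G p')) (hook_index a b M)"
    unfolding pairwise_def disjnt_def by blast
  moreover have "p = (Max (fst q), Max (snd q) - 1)" if "q \<in> ?H p" for q p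
    using that hook_pair_shape by (cases p) auto
  then have "pairwise (\<lambda>p p'. disjnt (?H p) (?H p')) (hook_index a b M)"
    unfolding pairwise_def disjnt_def by blast
  ultimately have "(\<Union>p\<in>hook_index a b M. ?G p) \<approx> (\<Union>p\<in>hook_index a b M. ?H p)"
    by (rule UN_eqpoll_UN)
  moreover have "(if M = 0 then {{#}} else {}) \<approx> (if M = 0 then {({}, {})} else ({} :: (nat set \<times> nat set) set))"
    by (simp add: singleton_eqpoll)
  ultimately show ?case
    unfolding box_partitions_decomp[of a b M] box_pairs_decomp[of a b M]
    by (intro Un_eqpoll_cong) (auto simp: disjnt_def hook_partition_def hook_pair_def)
qed

text \<open>Sums of naturals are kept as naturals under the coercion to \<open>int\<close>.\<close>
declare of_nat_sum [simp del] of_nat_sum_mset [simp del]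

definition frob_pairs :: "(nat set \<times> nat set) set" where
  "frob_pairs = {(X, Y). finite X \<and> finite Y \<and> 0 \<notin> Y}"

definition charge :: "nat set \<times> nat set \<Rightarrow> int" where
  "charge = (\<lambda>(X, Y). int (card X) - int (card Y))"

definition weight :: "nat set \<times> nat set \<Rightarrow> int" where
  "weight = (\<lambda>(X, Y). int (\<Sum>X + \<Sum>Y))"

definition pair_fiber :: "int \<Rightarrow> int \<Rightarrow> (nat set \<times> nat set) set" where
  "pair_fiber d M = {q \<in> frob_pairs. charge q = d \<and> weight q = M}"

definition partitions_of :: "int \<Rightarrow> nat multiset set" where
  "partitions_of n = {\<mu>. is_partition \<mu> \<and> int (sum_mset \<mu>) = n}"

lemma partitions_of_box: "partitions_of (int K) = box_partitions (Suc K) K K"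
proof -
  have "x \<le> sum_mset \<mu>" if "x \<in># \<mu>" for x and \<mu> :: "nat multiset"
    using that by (metis le_add1 multi_member_split sum_mset.add_mset)
  moreover have "size \<mu> \<le> sum_mset \<mu>" if "0 \<notin># \<mu>" for \<mu> :: "nat multiset"
    using that by (induction \<mu>) (auto simp: Suc_le_eq)
  ultimately show ?thesis
    unfolding partitions_of_def box_partitions_def is_partition_def
    by (auto intro: le_SucI)
qed

lemma pair_fiber_box: "pair_fiber 0 (int K) = box_pairs (Suc K) K K"
proof (intro equalityI subsetI)
  fix q assume "q \<in> pair_fiber 0 (int K)"
  moreover obtain X Y where q: "q = (X, Y)" by force
  ultimately have fin: "finite X" "finite Y" and "0 \<notin> Y" "card X = card Y" and sum: "\<Sum>X + \<Sum>Y = K"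
    unfolding pair_fiber_def frob_pairs_def charge_def weight_def by auto
  have "\<forall>x\<in>X. x \<le> K" "\<forall>y\<in>Y. y \<le> K"
    using fin sum by (auto intro: trans_le_add1 trans_le_add2 member_le_sum)
  then have "X \<subseteq> {..<Suc K}" "Y \<subseteq> {1..K}"
    using \<open>0 \<notin> Y\<close> by (auto simp: less_Suc_eq_le Suc_le_eq intro!: gr0I)
  then show "q \<in> box_pairs (Suc K) K K"
    using \<open>card X = card Y\<close> sum unfolding q box_pairs_def by simp
next
  fix q assume "q \<in> box_pairs (Suc K) K K"
  then show "q \<in> pair_fiber 0 (int K)"
    unfolding box_pairs_def pair_fiber_def frob_pairs_def charge_def weight_def
    by (auto intro: finite_subset)
qed

text \<open>Charge zero: this is Frobenius' description of a partition by its two sets of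
  hook arm lengths and (shifted) leg lengths.\<close>
lemma partitions_eqpoll_pair_fiber: "partitions_of n \<approx> pair_fiber 0 n"
proof (cases "n < 0")
  case True
  then have "partitions_of n = {}" "pair_fiber 0 n = {}"
    by (auto simp: partitions_of_def pair_fiber_def weight_def)
  then show ?thesis by simp
next
  case False
  then obtain K where "n = int K" by (metis nonneg_int_cases not_less)
  then show ?thesis
    using partitions_of_box pair_fiber_box box_partitions_eqpoll_box_pairs by simp
qed

text \<open>Shifting the Maya diagram of a pair by one step: every element of \<open>X\<close> moves up,
  every element of \<open>Y\<close> moves down, and the boundary element \<open>0 \<in> X\<close> / \<open>1 \<in> Y\<close>
  changes sides.  This raises the charge by one and the weight by the charge.\<close>
definition shift :: "nat set \<times> nat set \<Rightarrow> nat set \<times> nat set" where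
  "shift = (\<lambda>(X, Y). (Suc ` X \<union> (if 1 \<in> Y then {} else {0}), (\<lambda>y. y - 1) ` (Y - {1})))"

definition unshift :: "nat set \<times> nat set \<Rightarrow> nat set \<times> nat set" where
  "unshift = (\<lambda>(X, Y). ((\<lambda>x. x - 1) ` (X - {0}), Suc ` Y \<union> (if 0 \<in> X then {} else {1})))"

lemma Suc_image_pred:
  assumes "0 \<notin> Z" shows "Suc ` ((\<lambda>z. z - 1) ` Z) = Z"
proof -
  have "Suc ` ((\<lambda>z. z - 1) ` Z) = (\<lambda>z. z) ` Z"
    unfolding image_image
  proof (rule image_cong)
    show "Suc (z - 1) = z" if "z \<in> Z" for z using that assms by (cases z) auto
  qed simp
  then show ?thesis by simp
qed

lemma card_sum_Suc_image: "card (Suc ` X) = card X" "\<Sum>(Suc ` X) = \<Sum>X + card X"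
  by (simp_all add: card_image sum.reindex sum_Suc[of "\<lambda>x. x", simplified])

lemma unshift_shift:
  assumes "0 \<notin> Y" shows "unshift (shift (X, Y)) = (X, Y)"
proof -
  have "(Suc ` X \<union> (if 1 \<in> Y then {} else {0})) - {0} = Suc ` X" by auto
  moreover have "Suc ` ((\<lambda>y. y - 1) ` (Y - {1})) = Y - {1}"
    using assms by (intro Suc_image_pred) auto
  ultimately show ?thesis unfolding shift_def unshift_def by (auto simp: image_image)
qed

lemma shift_unshift:
  assumes "0 \<notin> Y" shows "shift (unshift (X, Y)) = (X, Y)"
proof -
  have "(Suc ` Y \<union> (if 0 \<in> X then {} else {1})) - {1} = Suc ` Y" using assms by auto
  moreover have "Suc ` ((\<lambda>x. x - 1) ` (X - {0})) = X - {0}" by (intro Suc_image_pred) auto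
  moreover have "1 \<in> Suc ` Y \<union> (if 0 \<in> X then {} else {1}) \<longleftrightarrow> 0 \<notin> X" using assms by auto
  ultimately show ?thesis unfolding shift_def unshift_def by (auto simp: image_image)
qed

lemma shift_bij: "bij_betw shift frob_pairs frob_pairs"
proof (rule bij_betw_byWitness[where f' = unshift])
  show "\<forall>q\<in>frob_pairs. unshift (shift q) = q" "\<forall>q\<in>frob_pairs. shift (unshift q) = q"
    unfolding frob_pairs_def using unshift_shift shift_unshift by auto
  show "shift ` frob_pairs \<subseteq> frob_pairs" "unshift ` frob_pairs \<subseteq> frob_pairs"
    unfolding frob_pairs_def shift_def unshift_def by (auto simp: le_Suc_eq split: if_splits)
qed

lemma shift_stats:
  assumes "q \<in> frob_pairs"
  shows "charge (shift q) = charge q + 1" "weight (shift q) = weight q + charge q"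
proof -
  obtain X Y where q: "q = (X, Y)" by force
  have fin: "finite X" "finite Y" and "0 \<notin> Y" using assms unfolding q frob_pairs_def by auto
  define X' Y' where "X' = Suc ` X \<union> (if 1 \<in> Y then {} else {0})" and "Y' = (\<lambda>y. y - 1) ` (Y - {1})"
  have "Y - {1} = Suc ` Y'"
    unfolding Y'_def using \<open>0 \<notin> Y\<close> Suc_image_pred[of "Y - {1}"] by simp
  then have Y': "card (Y - {1}) = card Y'" "\<Sum>(Y - {1}) = \<Sum>Y' + card Y'"
    using card_sum_Suc_image[of Y'] by simp_all
  have "int (card Y) = int (card Y') + (if 1 \<in> Y then 1 else 0)"
    "int (\<Sum>Y) = int (\<Sum>Y') + int (card Y') + (if 1 \<in> Y then 1 else 0)"
    using Y' card.remove[OF fin(2), of 1] sum.remove[OF fin(2), of 1 "\<lambda>y. y"] by (auto split: if_splits)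
  moreover have "card X' = card X + (if 1 \<in> Y then 0 else 1)" "\<Sum>X' = \<Sum>X + card X"
    unfolding X'_def using fin card_sum_Suc_image[of X] by (auto simp: card_insert_if)
  moreover have "shift q = (X', Y')" unfolding q shift_def X'_def Y'_def by simp
  ultimately show "charge (shift q) = charge q + 1" "weight (shift q) = weight q + charge q"
    unfolding q charge_def weight_def by (simp_all add: of_nat_add)
qed

lemma pair_fiber_shift: "pair_fiber d M \<approx> pair_fiber (d + 1) (M + d)"
proof -
  have inj: "inj_on shift (pair_fiber d M)"
    using bij_betw_imp_inj_on[OF shift_bij] unfolding pair_fiber_def by (rule inj_on_subset) auto
  have "shift ` pair_fiber d M = pair_fiber (d + 1) (M + d)"
  proof (intro equalityI subsetI)
    fix q assume "q \<in> shift ` pair_fiber d M"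
    then obtain p where p: "p \<in> frob_pairs" "charge p = d" "weight p = M" "q = shift p"
      unfolding pair_fiber_def by blast
    then show "q \<in> pair_fiber (d + 1) (M + d)"
      using shift_stats[OF p(1)] bij_betwE[OF shift_bij] unfolding pair_fiber_def by auto
  next
    fix q assume q: "q \<in> pair_fiber (d + 1) (M + d)"
    then have "q \<in> shift ` frob_pairs"
      using bij_betw_imp_surj_on[OF shift_bij] unfolding pair_fiber_def by auto
    then obtain p where p: "p \<in> frob_pairs" "q = shift p" by blast
    then show "q \<in> shift ` pair_fiber d M"
      using q shift_stats[OF p(1)] unfolding pair_fiber_def by auto
  qed
  then show ?thesis using inj_on_image_eqpoll_1[OF inj] eqpoll_refl by metis
qed

lemma binom2_succ: "binom2 (d + 1) = binom2 d + d"
proof -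
  have "(d + 1) * (d + 1 - 1) = d * (d - 1) + d * 2" by (simp add: algebra_simps)
  then show ?thesis unfolding binom2_def by simp
qed

text \<open>Iterating the shift moves every charge to zero; the weight drops by \<open>binom2 d\<close>.\<close>
lemma pair_fiber_normalize: "pair_fiber d M \<approx> pair_fiber 0 (M - binom2 d)"
proof (induction d arbitrary: M rule: int_induct[where k = 0])
  case base then show ?case by (simp add: binom2_def)
next
  case (step1 i)
  have "pair_fiber (i + 1) M \<approx> pair_fiber i (M - i)"
    using pair_fiber_shift[of i "M - i"] eqpoll_sym by simp
  also have "\<dots> \<approx> pair_fiber 0 (M - binom2 (i + 1))"
    using step1(2)[of "M - i"] binom2_succ[of i] by (simp add: algebra_simps)
  finally show ?case .
next
  case (step2 i)
  have "pair_fiber (i - 1) M \<approx> pair_fiber i (M + (i - 1))"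
    using pair_fiber_shift[of "i - 1" M] by simp
  also have "\<dots> \<approx> pair_fiber 0 (M - binom2 (i - 1))"
    using step2(2)[of "M + (i - 1)"] binom2_succ[of "i - 1"] by (simp add: algebra_simps)
  finally show ?case .
qed

lemma fiberwise_bij:
  assumes "\<And>k. {a \<in> A. f a = k} \<approx> {b \<in> B. g b = k}"
  shows "\<exists>h. bij_betw h A B \<and> (\<forall>a\<in>A. g (h a) = f a)"
proof -
  define H where "H k = (SOME h. bij_betw h {a \<in> A. f a = k} {b \<in> B. g b = k})" for k
  have H: "bij_betw (H k) {a \<in> A. f a = k} {b \<in> B. g b = k}" for k
    using assms[of k] unfolding H_def eqpoll_def by (rule someI_ex)
  define h where "h a = H (f a) a" for a
  have h_fiber: "h a \<in> B \<and> g (h a) = f a" if "a \<in> A" for a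
    using bij_betwE[OF H[of "f a"]] that unfolding h_def by blast
  have "inj_on h A"
  proof (rule inj_onI)
    fix a a' assume "a \<in> A" "a' \<in> A" "h a = h a'"
    moreover from this have "f a = f a'" using h_fiber by metis
    ultimately show "a = a'"
      using bij_betw_imp_inj_on[OF H[of "f a"]] unfolding h_def by (auto dest: inj_onD)
  qed
  moreover have "B \<subseteq> h ` A"
  proof
    fix b assume "b \<in> B"
    then have "b \<in> H (g b) ` {a \<in> A. f a = g b}"
      using bij_betw_imp_surj_on[OF H[of "g b"]] by simp
    then obtain a where "a \<in> A" "f a = g b" "b = H (g b) a" by blast
    then show "b \<in> h ` A" unfolding h_def by (intro image_eqI[of b _ a]) simp_all
  qed
  moreover have "h ` A \<subseteq> B" using h_fiber by auto
  ultimately have "bij_betw h A B" unfolding bij_betw_def by blast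
  then show ?thesis using h_fiber by blast
qed

definition charged_partitions :: "(nat multiset \<times> int) set" where
  "charged_partitions = {(\<mu>, d). is_partition \<mu>}"

text \<open>Combinatorial Jacobi triple product: pairs (partition, integer charge) correspond
  bijectively to Frobenius pairs, preserving the charge and with weight
  \<open>|\<mu>| + binom2 d\<close>.\<close>
lemma jacobi_bij:
  obtains \<phi> where "bij_betw \<phi> charged_partitions frob_pairs"
    and "\<And>\<mu> d. is_partition \<mu> \<Longrightarrow>
           charge (\<phi> (\<mu>, d)) = d \<and> weight (\<phi> (\<mu>, d)) = int (sum_mset \<mu>) + binom2 d"
proof -
  let ?key = "\<lambda>(\<mu>, d). (d, int (sum_mset \<mu>) + binom2 d)"
  have fibers: "{p \<in> charged_partitions. ?key p = k} \<approx> {q \<in> frob_pairs. (charge q, weight q) = k}" for k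
  proof -
    obtain d M where k: "k = (d, M)" by force
    have "bij_betw fst {p \<in> charged_partitions. ?key p = (d, M)} (partitions_of (M - binom2 d))"
      by (rule bij_betw_byWitness[where f' = "\<lambda>\<mu>. (\<mu>, d)"])
        (auto simp: charged_partitions_def partitions_of_def)
    then have "{p \<in> charged_partitions. ?key p = (d, M)} \<approx> partitions_of (M - binom2 d)"
      unfolding eqpoll_def by blast
    also have "\<dots> \<approx> pair_fiber 0 (M - binom2 d)" by (rule partitions_eqpoll_pair_fiber)
    also have "\<dots> \<approx> pair_fiber d M" using pair_fiber_normalize eqpoll_sym by blast
    finally show ?thesis unfolding k pair_fiber_def by simp
  qed
  obtain \<phi> where bij: "bij_betw \<phi> charged_partitions frob_pairs"
    and key: "\<forall>p\<in>charged_partitions. (charge (\<phi> p), weight (\<phi> p)) = ?key p"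
    using fiberwise_bij[OF fibers] by blast
  show thesis
  proof (rule that[OF bij])
    fix \<mu> d assume "is_partition \<mu>"
    then have "(\<mu>, d) \<in> charged_partitions" unfolding charged_partitions_def by simp
    then show "charge (\<phi> (\<mu>, d)) = d \<and> weight (\<phi> (\<mu>, d)) = int (sum_mset \<mu>) + binom2 d"
      using key by fastforce
  qed
qed

lemma bij_betw_image_pairs:
  assumes f: "bij_betw f A A'" and g: "bij_betw g B B'" and disj: "A' \<inter> B' = {}"
  shows "bij_betw (\<lambda>(X, Y). f ` X \<union> g ` Y)
           {(X, Y). X \<subseteq> A \<and> Y \<subseteq> B \<and> finite X \<and> finite Y} {V. V \<subseteq> A' \<union> B' \<and> finite V}"
proof (rule bij_betw_byWitness[where f' = "\<lambda>V. (inv_into A f ` (V \<inter> A'), inv_into B g ` (V \<inter> B'))"])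
  have img: "f ` A = A'" "g ` B = B'" and inj: "inj_on f A" "inj_on g B"
    using f g unfolding bij_betw_def by auto
  have parts: "(f ` X \<union> g ` Y) \<inter> A' = f ` X" "(f ` X \<union> g ` Y) \<inter> B' = g ` Y"
    if "X \<subseteq> A" "Y \<subseteq> B" for X Y
    using that img disj by blast+
  show "\<forall>q\<in>{(X, Y). X \<subseteq> A \<and> Y \<subseteq> B \<and> finite X \<and> finite Y}.
          (\<lambda>V. (inv_into A f ` (V \<inter> A'), inv_into B g ` (V \<inter> B'))) ((\<lambda>(X, Y). f ` X \<union> g ` Y) q) = q"
    using parts inj by auto
  show "\<forall>V\<in>{V. V \<subseteq> A' \<union> B' \<and> finite V}.
          (\<lambda>(X, Y). f ` X \<union> g ` Y) ((\<lambda>V. (inv_into A f ` (V \<inter> A'), inv_into B g ` (V \<inter> B'))) V) = V"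
    using image_inv_into_cancel[OF img(1)] image_inv_into_cancel[OF img(2)] by auto
  show "(\<lambda>(X, Y). f ` X \<union> g ` Y) ` {(X, Y). X \<subseteq> A \<and> Y \<subseteq> B \<and> finite X \<and> finite Y}
          \<subseteq> {V. V \<subseteq> A' \<union> B' \<and> finite V}"
    using img by auto
  show "(\<lambda>V. (inv_into A f ` (V \<inter> A'), inv_into B g ` (V \<inter> B'))) ` {V. V \<subseteq> A' \<union> B' \<and> finite V}
          \<subseteq> {(X, Y). X \<subseteq> A \<and> Y \<subseteq> B \<and> finite X \<and> finite Y}"
    using img by (auto intro: inv_into_into)
qed

text \<open>The residue classes \<open>A\<close> and \<open>-A\<close> modulo \<open>C\<close>, tagged \<open>True\<close> and \<open>False\<close>;
  the class of \<open>A\<close> also contains \<open>0\<close> when \<open>A = 0\<close>.\<close>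
definition res_class :: "int \<Rightarrow> int \<Rightarrow> (bool \<times> nat) set" where
  "res_class C A = {(s, n). if s then int n mod C = A mod C else 0 < n \<and> int n mod C = (- A) mod C}"

definition res_emb :: "int \<Rightarrow> int \<Rightarrow> nat set \<times> nat set \<Rightarrow> (bool \<times> nat) set" where
  "res_emb C A = (\<lambda>(X, Y). (\<lambda>j. (True, nat (C * int j + A))) ` X \<union> (\<lambda>j. (False, nat (C * int j - A))) ` Y)"

text \<open>For \<open>0 \<le> A < C\<close> the two tagged classes are enumerated by \<open>j \<mapsto> Cj + A\<close> (\<open>j \<ge> 0\<close>)
  and \<open>j \<mapsto> Cj - A\<close> (\<open>j \<ge> 1\<close>), so \<open>res_emb C A\<close> is a bijection from Frobenius pairs
  onto finite subsets of \<open>res_class C A\<close>.\<close>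
context
  fixes C A :: int
  assumes A_range: "0 \<le> A" "A < C"
begin

lemma plus_class_bij:
  "bij_betw (\<lambda>j. (True, nat (C * int j + A))) UNIV {v \<in> res_class C A. fst v}"
proof (rule bij_betw_byWitness[where f' = "\<lambda>v. nat (int (snd v) div C)"])
  show "\<forall>j\<in>UNIV. nat (int (snd (True, nat (C * int j + A))) div C) = j"
    using A_range by simp
  show "\<forall>v\<in>{v \<in> res_class C A. fst v}. (True, nat (C * int (nat (int (snd v) div C)) + A)) = v"
  proof
    fix v assume "v \<in> {v \<in> res_class C A. fst v}"
    then obtain n where v: "v = (True, n)" and "int n mod C = A" 
      using A_range unfolding res_class_def by auto
    then have "C * (int n div C) + A = int n" by (metis mult_div_mod_eq)
    moreover have "0 \<le> int n div C" using A_range by (simp add: pos_imp_zdiv_nonneg_iff)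
    ultimately show "(True, nat (C * int (nat (int (snd v) div C)) + A)) = v" unfolding v by simp
  qed
  show "(\<lambda>j. (True, nat (C * int j + A))) ` UNIV \<subseteq> {v \<in> res_class C A. fst v}"
    using A_range unfolding res_class_def by (auto simp: add.commute)
qed simp

lemma minus_class_div:
  assumes "int n mod C = (- A) mod C" shows "C * ((int n + A) div C) = int n + A"
proof -
  have "(int n + A) mod C = (int n mod C + A) mod C" by (simp add: mod_add_left_eq)
  also have "\<dots> = ((- A) mod C + A) mod C" using assms by simp
  also have "\<dots> = (- A + A) mod C" by (simp only: mod_add_left_eq)
  also have "\<dots> = 0" by simp
  finally show ?thesis using div_mult_mod_eq[of "int n + A" C] by (simp add: mult.commute)
qed

lemma minus_class_bij:
  "bij_betw (\<lambda>j. (False, nat (C * int j - A))) {0<..} {v \<in> res_class C A. \<not> fst v}"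
proof (rule bij_betw_byWitness[where f' = "\<lambda>v. nat ((int (snd v) + A) div C)"])
  have pos: "0 < C * int j - A" if "0 < j" for j
  proof -
    have "C \<le> C * int j" using that A_range by simp
    then show ?thesis using A_range by linarith
  qed
  show "\<forall>j\<in>{0<..}. nat ((int (snd (False, nat (C * int j - A))) + A) div C) = j"
  proof
    fix j :: nat assume "j \<in> {0<..}"
    then have "0 < C * int j - A" by (intro pos) simp
    then show "nat ((int (snd (False, nat (C * int j - A))) + A) div C) = j" using A_range by simp
  qed
  show "\<forall>v\<in>{v \<in> res_class C A. \<not> fst v}. (False, nat (C * int (nat ((int (snd v) + A) div C)) - A)) = v"
  proof
    fix v assume "v \<in> {v \<in> res_class C A. \<not> fst v}"
    then obtain n where v: "v = (False, n)" and "0 < n" and n_mod: "int n mod C = (- A) mod C"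
      unfolding res_class_def by auto
    have "C * ((int n + A) div C) = int n + A" using n_mod by (rule minus_class_div)
    moreover have "0 \<le> (int n + A) div C" using A_range by (simp add: pos_imp_zdiv_nonneg_iff)
    ultimately show "(False, nat (C * int (nat ((int (snd v) + A) div C)) - A)) = v" unfolding v by simp
  qed
  show "(\<lambda>j. (False, nat (C * int j - A))) ` {0<..} \<subseteq> {v \<in> res_class C A. \<not> fst v}"
  proof (rule image_subsetI)
    fix j :: nat assume "j \<in> {0<..}"
    then have "0 < C * int j - A" by (intro pos) simp
    moreover have "(C * int j - A) mod C = (- A) mod C"
      by (metis add.commute diff_conv_add_uminus mod_mult_self2 mult.commute)
    ultimately show "(False, nat (C * int j - A)) \<in> {v \<in> res_class C A. \<not> fst v}"
      unfolding res_class_def by simp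
  qed
  show "(\<lambda>v. nat ((int (snd v) + A) div C)) ` {v \<in> res_class C A. \<not> fst v} \<subseteq> {0<..}"
  proof (rule image_subsetI)
    fix v assume "v \<in> {v \<in> res_class C A. \<not> fst v}"
    then obtain n where v: "v = (False, n)" and "0 < n" and n_mod: "int n mod C = (- A) mod C"
      unfolding res_class_def by auto
    have "0 < C * ((int n + A) div C)"
      using minus_class_div[OF n_mod] \<open>0 < n\<close> A_range by simp
    then show "nat ((int (snd v) + A) div C) \<in> {0<..}"
      unfolding v using A_range by (simp add: zero_less_mult_iff)
  qed
qed

lemma res_emb_bij: "bij_betw (res_emb C A) frob_pairs {V. V \<subseteq> res_class C A \<and> finite V}"
proof -
  have "frob_pairs = {(X, Y). X \<subseteq> UNIV \<and> Y \<subseteq> {0<..} \<and> finite X \<and> finite Y}"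
    unfolding frob_pairs_def by (auto intro!: gr0I)
  moreover have "res_class C A = {v \<in> res_class C A. fst v} \<union> {v \<in> res_class C A. \<not> fst v}" by auto
  ultimately show ?thesis
    unfolding res_emb_def using bij_betw_image_pairs[OF plus_class_bij minus_class_bij] by auto
qed

lemma res_emb_stats:
  assumes "q \<in> frob_pairs"
  shows "int (card (res_emb C A q)) = charge q + 2 * int (card (snd q))"
    and "(\<Sum>v\<in>res_emb C A q. int (snd v)) = C * weight q + A * charge q"
proof -
  obtain X Y where q: "q = (X, Y)" by force
  have fin: "finite X" "finite Y" and Y_pos: "Y \<subseteq> {0<..}"
    using assms unfolding q frob_pairs_def by (auto intro!: gr0I)
  let ?p = "\<lambda>j. (True, nat (C * int j + A))" and ?m = "\<lambda>j. (False, nat (C * int j - A))"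
  have inj: "inj_on ?p X" "inj_on ?m Y"
    using bij_betw_imp_inj_on[OF plus_class_bij] bij_betw_imp_inj_on[OF minus_class_bij] Y_pos
    by (auto intro: inj_on_subset)
  have disj: "?p ` X \<inter> ?m ` Y = {}" by auto
  have "card (res_emb C A q) = card X + card Y"
    unfolding q res_emb_def using card_Un_disjoint[OF _ _ disj] fin inj by (simp add: card_image)
  then show "int (card (res_emb C A q)) = charge q + 2 * int (card (snd q))"
    unfolding q charge_def by simp
  have minus_pos: "0 \<le> C * int j - A" if "j \<in> Y" for j
    using bij_betwE[OF minus_class_bij] Y_pos that unfolding res_class_def by force
  have "(\<Sum>v\<in>res_emb C A q. int (snd v)) = (\<Sum>j\<in>X. C * int j + A) + (\<Sum>j\<in>Y. C * int j - A)"
    unfolding q res_emb_def using fin inj disj A_range minus_pos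
    by (simp add: sum.union_disjoint sum.reindex)
  also have "\<dots> = C * weight q + A * charge q"
    unfolding q weight_def charge_def
    by (simp add: sum.distrib sum_subtractf sum_distrib_left of_nat_sum algebra_simps)
  finally show "(\<Sum>v\<in>res_emb C A q. int (snd v)) = C * weight q + A * charge q" .
qed

end

definition slice :: "(nat \<times> 'c) set \<Rightarrow> nat \<Rightarrow> 'c set" where
  "slice W i = {v. (i, v) \<in> W}"

lemma slice_Sigma: "i \<in> I \<Longrightarrow> slice (Sigma I V) i = V i"
  unfolding slice_def by auto

lemma Sigma_slice: "W \<subseteq> Sigma I R \<Longrightarrow> Sigma I (slice W) = W"
  unfolding slice_def by auto

lemma slice_in_finite_subsets:
  assumes "W \<subseteq> Sigma I R" "finite W" "i \<in> I"
  shows "slice W i \<in> {V. V \<subseteq> R i \<and> finite V}"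
proof -
  have "slice W i \<subseteq> snd ` W" unfolding slice_def by force
  then show ?thesis using assms unfolding slice_def by (auto intro: finite_subset)
qed

lemma bij_betw_tuples_Sigma:
  fixes h :: "nat \<Rightarrow> 'a \<times> 'b \<Rightarrow> 'c set"
  assumes h: "\<And>i. i < t \<Longrightarrow> bij_betw (h i) (P i) {V. V \<subseteq> R i \<and> finite V}"
  shows "bij_betw (\<lambda>(f, g). Sigma {..<t} (\<lambda>i. h i (f i, g i)))
           {(f, g). (\<forall>i. t \<le> i \<longrightarrow> f i = f0 \<and> g i = g0) \<and> (\<forall>i<t. (f i, g i) \<in> P i)}
           {W. W \<subseteq> Sigma {..<t} R \<and> finite W}"
proof -
  define unpack where "unpack W = (\<lambda>i. if i < t then fst (inv_into (P i) (h i) (slice W i)) else f0,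
                               \<lambda>i. if i < t then snd (inv_into (P i) (h i) (slice W i)) else g0)" for W
  let ?pack = "\<lambda>(f, g). Sigma {..<t} (\<lambda>i. h i (f i, g i))"
  let ?tuples = "{(f, g). (\<forall>i. t \<le> i \<longrightarrow> f i = f0 \<and> g i = g0) \<and> (\<forall>i<t. (f i, g i) \<in> P i)}"
  show ?thesis
  proof (rule bij_betw_byWitness[where f' = unpack])
    show "\<forall>x\<in>?tuples. unpack (?pack x) = x"
    proof
      fix x assume "x \<in> ?tuples"
      moreover obtain f g where x: "x = (f, g)" by force
      ultimately have out: "\<forall>i. t \<le> i \<longrightarrow> f i = f0 \<and> g i = g0" and P: "\<forall>i<t. (f i, g i) \<in> P i"
        by auto
      have "inv_into (P i) (h i) (slice (?pack x) i) = (f i, g i)" if "i < t" for i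
        using bij_betw_inv_into_left[OF h] P that unfolding x by (simp add: slice_Sigma)
      then show "unpack (?pack x) = x"
        unfolding unpack_def x using out by (auto simp: not_less)
    qed
    show "\<forall>W\<in>{W. W \<subseteq> Sigma {..<t} R \<and> finite W}. ?pack (unpack W) = W"
    proof
      fix W assume W: "W \<in> {W. W \<subseteq> Sigma {..<t} R \<and> finite W}"
      obtain f g where fg: "unpack W = (f, g)" by force
      have "h i (f i, g i) = slice W i" if "i < t" for i
        using bij_betw_inv_into_right[OF h[OF that] slice_in_finite_subsets[of W "{..<t}" R i]] W that fg
        unfolding unpack_def by auto
      then have "?pack (unpack W) = Sigma {..<t} (slice W)"
        unfolding fg by (auto intro: Sigma_cong)
      also have "\<dots> = W" using W by (intro Sigma_slice[where R = R]) simp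
      finally show "?pack (unpack W) = W" .
    qed
    show "?pack ` ?tuples \<subseteq> {W. W \<subseteq> Sigma {..<t} R \<and> finite W}"
    proof clarify
      fix f g assume "\<forall>i<t. (f i, g i) \<in> P i"
      then have "h i (f i, g i) \<subseteq> R i \<and> finite (h i (f i, g i))" if "i < t" for i
        using bij_betwE[OF h[OF that]] that by blast
      then show "Sigma {..<t} (\<lambda>i. h i (f i, g i)) \<subseteq> Sigma {..<t} R \<and>
                 finite (Sigma {..<t} (\<lambda>i. h i (f i, g i)))"
        by auto
    qed
    show "unpack ` {W. W \<subseteq> Sigma {..<t} R \<and> finite W} \<subseteq> ?tuples"
    proof (rule image_subsetI)
      fix W assume "W \<in> {W. W \<subseteq> Sigma {..<t} R \<and> finite W}"
      then have W: "W \<subseteq> Sigma {..<t} R" "finite W" by auto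
      have "inv_into (P i) (h i) (slice W i) \<in> P i" if "i < t" for i
        using bij_betw_imp_surj_on[OF h[OF that]] slice_in_finite_subsets[OF W] that
        by (auto intro: inv_into_into)
      then show "unpack W \<in> ?tuples" unfolding unpack_def by auto
    qed
  qed
qed

lemma sum_without_weightless:
  assumes "finite W" and "\<forall>z\<in>Z. val z = 0"
  shows "sum val W = sum val (W - Z)"
  using assms by (intro sum.mono_neutral_right) auto

lemma card_marked_split:
  assumes "finite W" and "z0 \<in> Z"
  shows "card W = card (W - Z) + card (W \<inter> (Z - {z0})) + (if z0 \<in> W then 1 else 0)"
proof -
  have "card W = card (W \<inter> Z) + card (W - Z)" using assms by (intro card_Int_Diff)
  also have "card (W \<inter> Z) = card (W \<inter> Z \<inter> {z0}) + card (W \<inter> Z - {z0})"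
    using assms by (intro card_Int_Diff) simp
  finally show ?thesis
    using assms by (simp add: Int_insert_right Diff_Int_distrib2 Int_Diff)
qed

text \<open>Toggling a fixed weightless element \<open>z\<^sub>0\<close> corrects the parity: odd subsets of
  \<open>R \<union> Z\<close> correspond to arbitrary subsets of \<open>R\<close> together with arbitrary subsets of
  \<open>Z - {z\<^sub>0}\<close>, with the same weight.\<close>
lemma parity_toggle_bij:
  fixes val :: "'a \<Rightarrow> nat"
  assumes fin: "finite Z" and disj: "R \<inter> Z = {}" and val0: "\<forall>z\<in>Z. val z = 0" and z0: "z0 \<in> Z"
  shows "bij_betw (\<lambda>W. (W - Z, W \<inter> (Z - {z0})))
           {W. W \<subseteq> R \<union> Z \<and> finite W \<and> odd (card W) \<and> Q (sum val W)}
           ({W. W \<subseteq> R \<and> finite W \<and> Q (sum val W)} \<times> Pow (Z - {z0}))"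
proof -
  let ?L = "{W. W \<subseteq> R \<union> Z \<and> finite W \<and> odd (card W) \<and> Q (sum val W)}"
  let ?D = "{W. W \<subseteq> R \<and> finite W \<and> Q (sum val W)}"
  let ?E = "\<lambda>W K. if odd (card W + card K) then {} else {z0}"
  have join_parts: "(W \<union> K \<union> ?E W K) - Z = W" "(W \<union> K \<union> ?E W K) \<inter> (Z - {z0}) = K"
    "z0 \<in> W \<union> K \<union> ?E W K \<longleftrightarrow> even (card W + card K)"
    if "W \<subseteq> R" "K \<subseteq> Z - {z0}" for W K
    using that z0 disj by auto
  show ?thesis
  proof (rule bij_betw_byWitness[where f' = "\<lambda>(W, K). W \<union> K \<union> ?E W K"])
    show "\<forall>W\<in>?L. (\<lambda>(W, K). W \<union> K \<union> ?E W K) (W - Z, W \<inter> (Z - {z0})) = W"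
    proof
      fix W assume W: "W \<in> ?L"
      then have "?E (W - Z) (W \<inter> (Z - {z0})) = (if z0 \<in> W then {z0} else {})"
        using card_marked_split[of W, OF _ z0] by auto
      moreover have "(W - Z) \<union> (W \<inter> (Z - {z0})) \<union> (if z0 \<in> W then {z0} else {}) = W"
        using W z0 by auto
      ultimately show "(\<lambda>(W, K). W \<union> K \<union> ?E W K) (W - Z, W \<inter> (Z - {z0})) = W"
        by simp
    qed
    show "\<forall>p\<in>?D \<times> Pow (Z - {z0}). (\<lambda>W. (W - Z, W \<inter> (Z - {z0}))) ((\<lambda>(W, K). W \<union> K \<union> ?E W K) p) = p"
    proof
      fix p assume "p \<in> ?D \<times> Pow (Z - {z0})"
      then obtain W K where p: "p = (W, K)" "W \<subseteq> R" "K \<subseteq> Z - {z0}" by auto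
      show "(\<lambda>W. (W - Z, W \<inter> (Z - {z0}))) ((\<lambda>(W, K). W \<union> K \<union> ?E W K) p) = p"
        unfolding p(1) using join_parts[OF p(2,3)] by simp
    qed
    show "(\<lambda>W. (W - Z, W \<inter> (Z - {z0}))) ` ?L \<subseteq> ?D \<times> Pow (Z - {z0})"
    proof (rule image_subsetI)
      fix W assume "W \<in> ?L"
      then show "(W - Z, W \<inter> (Z - {z0})) \<in> ?D \<times> Pow (Z - {z0})"
        using sum_without_weightless[of W, OF _ val0] by auto
    qed
    show "(\<lambda>(W, K). W \<union> K \<union> ?E W K) ` (?D \<times> Pow (Z - {z0})) \<subseteq> ?L"
    proof clarify
      fix W K assume W: "W \<subseteq> R" "finite W" "Q (sum val W)" and K: "K \<subseteq> Z - {z0}"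
      let ?V = "W \<union> K \<union> ?E W K"
      have fK: "finite K" using K fin by (auto intro: finite_subset)
      have "odd (card ?V)" and "sum val ?V = sum val W"
        using card_marked_split[of ?V, OF _ z0] sum_without_weightless[of ?V, OF _ val0]
          join_parts[OF W(1) K] W fK by auto
      then show "?V \<subseteq> R \<union> Z \<and> finite ?V \<and> odd (card ?V) \<and> Q (sum val ?V)"
        using W K fK z0 by auto
    qed
  qed
qed

lemma card_odd_subsets_extend:
  fixes val :: "'a \<Rightarrow> nat"
  assumes fin: "finite Z" and disj: "R \<inter> Z = {}" and val0: "\<forall>z\<in>Z. val z = 0"
  shows "card {W. W \<subseteq> R \<union> Z \<and> finite W \<and> odd (card W) \<and> Q (sum val W)} =
    (if Z = {} then card {W. W \<subseteq> R \<and> finite W \<and> odd (card W) \<and> Q (sum val W)}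
     else 2 ^ (card Z - 1) * card {W. W \<subseteq> R \<and> finite W \<and> Q (sum val W)})"
proof (cases "Z = {}")
  case False
  then obtain z0 where z0: "z0 \<in> Z" by blast
  show ?thesis
    using bij_betw_same_card[OF parity_toggle_bij[OF fin disj val0 z0]] False fin z0
    by (simp add: card_cartesian_product card_Pow)
qed simp

lemma card_bij_betw_Collect:
  assumes "bij_betw h A B" and "\<And>a. a \<in> A \<Longrightarrow> P a \<longleftrightarrow> Q (h a)"
  shows "card {a \<in> A. P a} = card {b \<in> B. Q b}"
proof -
  have "h ` {a \<in> A. P a} = {b \<in> B. Q b}"
    using assms bij_betw_imp_surj_on[OF assms(1)] by (auto dest: bij_betwE)
  moreover have "inj_on h {a \<in> A. P a}"
    using bij_betw_imp_inj_on[OF assms(1)] by (rule inj_on_subset) auto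
  ultimately show ?thesis by (metis card_image)
qed

lemma Sigma_stats:
  fixes t :: nat and V :: "nat \<Rightarrow> ('a \<times> nat) set"
  assumes "\<forall>i<t. finite (V i)"
  shows "int (\<Sum>x\<in>Sigma {..<t} V. snd (snd x)) = (\<Sum>i<t. \<Sum>v\<in>V i. int (snd v))"
    and "card (Sigma {..<t} V) = (\<Sum>i<t. card (V i))"
proof -
  have fin: "finite {..<t}" "\<forall>i\<in>{..<t}. finite (V i)" using assms by auto
  show "int (\<Sum>x\<in>Sigma {..<t} V. snd (snd x)) = (\<Sum>i<t. \<Sum>v\<in>V i. int (snd v))"
  proof -
    have "(\<Sum>i<t. \<Sum>v\<in>V i. int (snd v)) = (\<Sum>(i, v)\<in>Sigma {..<t} V. int (snd v))"
      by (rule sum.Sigma[OF fin])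
    then show ?thesis by (simp add: of_nat_sum split_beta)
  qed
  show "card (Sigma {..<t} V) = (\<Sum>i<t. card (V i))"
    using fin by (rule card_SigmaI)
qed

lemma residue_component:
  assumes \<phi>_bij: "bij_betw \<phi> charged_partitions frob_pairs"
    and \<phi>_stats: "\<And>\<mu> d. is_partition \<mu> \<Longrightarrow>
           charge (\<phi> (\<mu>, d)) = d \<and> weight (\<phi> (\<mu>, d)) = int (sum_mset \<mu>) + binom2 d"
    and A_range: "0 \<le> A" "A < C"
  shows "bij_betw (res_emb C A \<circ> \<phi>) charged_partitions {V. V \<subseteq> res_class C A \<and> finite V}"
    and "is_partition \<mu> \<Longrightarrow>
           (\<Sum>v\<in>(res_emb C A \<circ> \<phi>) (\<mu>, d). int (snd v)) = C * (int (sum_mset \<mu>) + binom2 d) + A * d"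
    and "is_partition \<mu> \<Longrightarrow> even (int (card ((res_emb C A \<circ> \<phi>) (\<mu>, d))) - d)"
proof -
  show "bij_betw (res_emb C A \<circ> \<phi>) charged_partitions {V. V \<subseteq> res_class C A \<and> finite V}"
    using bij_betw_trans[OF \<phi>_bij res_emb_bij[OF A_range]] .
  assume "is_partition \<mu>"
  then have "(\<mu>, d) \<in> charged_partitions" unfolding charged_partitions_def by simp
  then have q: "\<phi> (\<mu>, d) \<in> frob_pairs" using bij_betwE[OF \<phi>_bij] by blast
  show "(\<Sum>v\<in>(res_emb C A \<circ> \<phi>) (\<mu>, d). int (snd v)) = C * (int (sum_mset \<mu>) + binom2 d) + A * d"
    using res_emb_stats(2)[OF A_range q] \<phi>_stats[OF \<open>is_partition \<mu>\<close>] by simp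
  show "even (int (card ((res_emb C A \<circ> \<phi>) (\<mu>, d))) - d)"
    using res_emb_stats(1)[OF A_range q] \<phi>_stats[OF \<open>is_partition \<mu>\<close>] by simp
qed

lemma tuple_count_residues:
  fixes t :: nat and C A :: "nat \<Rightarrow> int"
  assumes range: "\<forall>i<t. 0 \<le> A i \<and> A i < C i"
  shows "tuple_count t C A N = card {W. W \<subseteq> Sigma {..<t} (\<lambda>i. res_class (C i) (A i)) \<and> finite W \<and>
           odd (card W) \<and> int (\<Sum>x\<in>W. snd (snd x)) = N}"
proof -
  obtain \<phi> where \<phi>_bij: "bij_betw \<phi> charged_partitions frob_pairs"
    and \<phi>_stats: "\<And>\<mu> d. is_partition \<mu> \<Longrightarrow>
           charge (\<phi> (\<mu>, d)) = d \<and> weight (\<phi> (\<mu>, d)) = int (sum_mset \<mu>) + binom2 d"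
    by (rule jacobi_bij) auto
  define h where "h i = res_emb (C i) (A i) \<circ> \<phi>" for i
  have h_bij: "bij_betw (h i) charged_partitions {V. V \<subseteq> res_class (C i) (A i) \<and> finite V}"
    if "i < t" for i
    unfolding h_def using residue_component(1)[OF \<phi>_bij \<phi>_stats] range that by simp
  have h_stats: "finite (h i (\<mu>, d))"
    "(\<Sum>v\<in>h i (\<mu>, d). int (snd v)) = C i * (int (sum_mset \<mu>) + binom2 d) + A i * d"
    "even (int (card (h i (\<mu>, d))) - d)"
    if "i < t" "is_partition \<mu>" for i \<mu> d
  proof -
    have "(\<mu>, d) \<in> charged_partitions" using that unfolding charged_partitions_def by simp
    then show "finite (h i (\<mu>, d))" using bij_betwE[OF h_bij[OF that(1)]] by blast
    show "(\<Sum>v\<in>h i (\<mu>, d). int (snd v)) = C i * (int (sum_mset \<mu>) + binom2 d) + A i * d"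
      "even (int (card (h i (\<mu>, d))) - d)"
      unfolding h_def using residue_component(2,3)[OF \<phi>_bij \<phi>_stats _ _ that(2)] range that by auto
  qed
  let ?T = "{(\<mu>, d). (\<forall>i. t \<le> i \<longrightarrow> \<mu> i = {#} \<and> d i = (0::int)) \<and> (\<forall>i<t. (\<mu> i, d i) \<in> charged_partitions)}"
  let ?pack = "\<lambda>(\<mu>, d). Sigma {..<t} (\<lambda>i. h i (\<mu> i, d i))"
  let ?R = "Sigma {..<t} (\<lambda>i. res_class (C i) (A i))"
  let ?P = "\<lambda>(\<mu>, d). odd (\<Sum>i<t. d i) \<and>
      (\<Sum>i<t. C i * int (sum_mset (\<mu> i))) + (\<Sum>i<t. C i * binom2 (d i)) + (\<Sum>i<t. A i * d i) = N"
  have "tuple_count t C A N = card {x \<in> ?T. ?P x}"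
    unfolding tuple_count_def charged_partitions_def by (rule arg_cong[where f = card]) auto
  also have "\<dots> = card {W \<in> {W. W \<subseteq> ?R \<and> finite W}. odd (card W) \<and> int (\<Sum>x\<in>W. snd (snd x)) = N}"
  proof (rule card_bij_betw_Collect[OF bij_betw_tuples_Sigma[OF h_bij]])
    fix x assume "x \<in> ?T"
    then obtain \<mu> d where x: "x = (\<mu>, d)" and part: "\<forall>i<t. is_partition (\<mu> i)"
      unfolding charged_partitions_def by auto
    let ?V = "\<lambda>i. h i (\<mu> i, d i)"
    have fin: "\<forall>i<t. finite (?V i)" using h_stats(1) part by blast
    have "int (\<Sum>x\<in>?pack x. snd (snd x)) = (\<Sum>i<t. C i * (int (sum_mset (\<mu> i)) + binom2 (d i)) + A i * d i)"
      unfolding x using Sigma_stats(1)[OF fin] h_stats(2) part by simp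
    also have "\<dots> = (\<Sum>i<t. C i * int (sum_mset (\<mu> i))) + (\<Sum>i<t. C i * binom2 (d i)) + (\<Sum>i<t. A i * d i)"
      by (simp add: sum.distrib distrib_left)
    finally have weight_eq: "int (\<Sum>x\<in>?pack x. snd (snd x)) = \<dots>" .
    have "even ((\<Sum>i<t. int (card (?V i))) - (\<Sum>i<t. d i))"
      unfolding sum_subtractf[symmetric] using h_stats(3) part by (auto intro: dvd_sum)
    then have "odd (card (?pack x)) \<longleftrightarrow> odd (\<Sum>i<t. d i)"
      unfolding x using Sigma_stats(2)[OF fin] by (simp flip: of_nat_sum)
    then show "?P x \<longleftrightarrow> odd (card (?pack x)) \<and> int (\<Sum>x\<in>?pack x. snd (snd x)) = N"
      using weight_eq unfolding x by simp
  qed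
  finally show ?thesis by (simp add: conj_assoc)
qed

text \<open>The tagged residue classes consist of the positive elements of the multiset \<open>S\<close>
  together with one extra weightless element \<open>(i, True, 0)\<close> for every \<open>A i = 0\<close>.\<close>
definition zero_slots :: "nat \<Rightarrow> (nat \<Rightarrow> int) \<Rightarrow> (nat \<times> bool \<times> nat) set" where
  "zero_slots t A = {(i, True, 0) | i. i < t \<and> A i = 0}"

lemma res_class_Sigma_split:
  assumes range: "\<forall>i<t. 0 \<le> A i \<and> A i < C i"
  shows "Sigma {..<t} (\<lambda>i. res_class (C i) (A i)) = res_mset t C A \<union> zero_slots t A"
    and "res_mset t C A \<inter> zero_slots t A = {}"
    and "card (zero_slots t A) = zero_count t A"
proof -
  have zero: "(True, 0) \<in> res_class (C i) (A i) \<longleftrightarrow> A i = 0" if "i < t" for i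
    using range that unfolding res_class_def by auto
  show "Sigma {..<t} (\<lambda>i. res_class (C i) (A i)) = res_mset t C A \<union> zero_slots t A"
    unfolding res_mset_def zero_slots_def using zero
    by (auto simp: res_class_def split: if_splits)
  show "res_mset t C A \<inter> zero_slots t A = {}"
    unfolding res_mset_def zero_slots_def by auto
  have "zero_slots t A = (\<lambda>i. (i, True, 0)) ` {i. i < t \<and> A i = 0}"
    unfolding zero_slots_def by auto
  then show "card (zero_slots t A) = zero_count t A"
    unfolding zero_count_def by (simp add: card_image inj_on_def)
qed

lemma tuple_count_D_count:
  assumes range: "\<forall>i<t. 0 \<le> A i \<and> A i < C i"
  shows "tuple_count t C A N = 2 ^ (max (zero_count t A) 1 - 1) * D_count t C A N"
proof -
  let ?val = "\<lambda>x :: nat \<times> bool \<times> nat. snd (snd x)"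
  have "tuple_count t C A N = card {W. W \<subseteq> res_mset t C A \<union> zero_slots t A \<and> finite W \<and>
           odd (card W) \<and> int (sum ?val W) = N}"
    using tuple_count_residues[OF range] res_class_Sigma_split(1)[OF range] by simp
  also have "\<dots> = (if zero_slots t A = {}
                    then card {W. W \<subseteq> res_mset t C A \<and> finite W \<and> odd (card W) \<and> int (sum ?val W) = N}
                    else 2 ^ (card (zero_slots t A) - 1) *
                         card {W. W \<subseteq> res_mset t C A \<and> finite W \<and> int (sum ?val W) = N})"
    using res_class_Sigma_split(2)[OF range]
    by (intro card_odd_subsets_extend) (auto simp: zero_slots_def)
  also have "\<dots> = 2 ^ (max (zero_count t A) 1 - 1) * D_count t C A N"
  proof (cases "zero_slots t A = {}")
    case True
    then have "\<forall>i<t. A i \<noteq> 0" unfolding zero_slots_def by auto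
    then have "{W. W \<subseteq> res_mset t C A \<and> finite W \<and> odd (card W) \<and> int (sum ?val W) = N}
        = {X. X \<subseteq> res_mset t C A \<and> finite X \<and> int (sum ?val X) = N \<and>
              ((\<forall>i<t. A i \<noteq> 0) \<longrightarrow> odd (card X))}" by auto
    moreover have "zero_count t A = 0" using True res_class_Sigma_split(3)[OF range] by simp
    ultimately show ?thesis using True unfolding D_count_def by simp
  next
    case False
    then obtain i where "i < t" "A i = 0" unfolding zero_slots_def by auto
    then have "{W. W \<subseteq> res_mset t C A \<and> finite W \<and> int (sum ?val W) = N}
        = {X. X \<subseteq> res_mset t C A \<and> finite X \<and> int (sum ?val X) = N \<and>
              ((\<forall>i<t. A i \<noteq> 0) \<longrightarrow> odd (card X))}"
      and "zero_count t A \<ge> 1"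
      by (auto simp: Suc_le_eq card_gt_0_iff zero_count_def)
    then show ?thesis
      using False res_class_Sigma_split(3)[OF range] unfolding D_count_def
      by (simp add: max_def)
  qed
  finally show ?thesis .
qed

lemma power_ratio_eq_iff:
  fixes x y a b :: nat
  assumes "a \<ge> 1" "b \<ge> 1"
  shows "2 ^ (a - 1) * x = 2 ^ (b - 1) * y \<longleftrightarrow> real x = (2::real) powi (int b - int a) * real y"
proof -
  have "int b - int a = int (b - 1) - int (a - 1)" using assms by simp
  then have ratio: "(2::real) powi (int b - int a) = 2 ^ (b - 1) / 2 ^ (a - 1)"
    by (simp add: power_int_diff)
  have "2 ^ (a - 1) * x = 2 ^ (b - 1) * y \<longleftrightarrow> real (2 ^ (a - 1) * x) = real (2 ^ (b - 1) * y)"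
    by (simp only: of_nat_eq_iff)
  also have "\<dots> \<longleftrightarrow> (2::real) ^ (a - 1) * real x = 2 ^ (b - 1) * real y" by simp
  also have "\<dots> \<longleftrightarrow> real x = 2 ^ (b - 1) / 2 ^ (a - 1) * real y"
    by (simp add: field_simps)
  finally show ?thesis using ratio by simp
qed

text \<open>Main theorem: by \<open>tuple_count_D_count\<close> for \<open>A\<close> and for \<open>B\<close> (note \<open>2A \<le> C\<close> and
  \<open>C \<ge> 1\<close> give \<open>A < C\<close>), both conditions compare the same numbers.\<close>
theorem theorem2p3:
  fixes t :: nat and C A B :: "nat \<Rightarrow> int" and m N0 :: int
  assumes "t \<ge> 1"
    and "\<forall>i<t. C i \<ge> 1"
    and "\<forall>i<t. 0 \<le> A i \<and> 2 * A i \<le> C i"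
    and "\<forall>i<t. 0 \<le> B i \<and> 2 * B i \<le> C i"
    and "m \<ge> 0" and "N0 \<ge> 1"
  shows "(\<forall>N\<ge>N0. tuple_count t C A N = tuple_count t C B (N - m))
     \<longleftrightarrow> (\<forall>N\<ge>N0. real (D_count t C A N) =
           (2::real) powi (int (max (zero_count t B) 1) - int (max (zero_count t A) 1))
           * real (D_count t C B (N - m)))"
proof -
  have "\<forall>i<t. 0 \<le> A i \<and> A i < C i" "\<forall>i<t. 0 \<le> B i \<and> B i < C i"
    using assms(2-4) by force+
  then have "tuple_count t C A N = tuple_count t C B (N - m) \<longleftrightarrow>
      real (D_count t C A N) =
        (2::real) powi (int (max (zero_count t B) 1) - int (max (zero_count t A) 1))
        * real (D_count t C B (N - m))" for N
    by (simp only: tuple_count_D_count power_ratio_eq_iff[of "max _ 1" "max _ 1"] max.cobounded2)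
  then show ?thesis by simp
qed

end
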